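(* Let $B$ be a commutative ring with identity and $A$ a dense subring of $B$. Then the map $\Theta:\min(B)\to\min(A)$, $\Theta(P)=P\cap A$, is a homeomorphism; in particular $\min(A)$ is homeomorphic to $\min(B)$.
   Context: All rings are commutative with identity; subrings contain the identity. For a ring $R$, $\min(R)$ denotes the set of minimal prime ideals of $R$ with the subspace topology induced from the Zariski topology on $\operatorname{spec} R$. A subring $A$ of $B$ is dense in $B$ if for every ideal $I$ of $B$ and every $b\in B\setminus \operatorname{rad}(I)$ there exists $a\in B\setminus\operatorname{rad}(I)$ with $ab\in A$. *)

theory Defs
  imports "HOL-Analysis.Analysis"
begin

text \<open>Rings are carrier sets inside a commutative ring type; the ambient ring B is
  taken to be the whole type (UNIV), and subrings are subsets containing 1.\<close>

definition subring_of :: "'a::comm_ring_1 set \<Rightarrow> bool" where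
  "subring_of R \<longleftrightarrow> 1 \<in> R \<and> (\<forall>x\<in>R. \<forall>y\<in>R. x + y \<in> R \<and> x * y \<in> R) \<and> (\<forall>x\<in>R. - x \<in> R)"

definition ideal_of :: "'a::comm_ring_1 set \<Rightarrow> 'a set \<Rightarrow> bool" where
  "ideal_of R I \<longleftrightarrow> I \<subseteq> R \<and> 0 \<in> I \<and> (\<forall>x\<in>I. \<forall>y\<in>I. x + y \<in> I)
     \<and> (\<forall>x\<in>I. - x \<in> I) \<and> (\<forall>r\<in>R. \<forall>x\<in>I. r * x \<in> I)"

definition prime_ideal_of :: "'a::comm_ring_1 set \<Rightarrow> 'a set \<Rightarrow> bool" where
  "prime_ideal_of R P \<longleftrightarrow> ideal_of R P \<and> P \<noteq> R
     \<and> (\<forall>x\<in>R. \<forall>y\<in>R. x * y \<in> P \<longrightarrow> x \<in> P \<or> y \<in> P)"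

definition spec :: "'a::comm_ring_1 set \<Rightarrow> 'a set set" where
  "spec R = {P. prime_ideal_of R P}"

definition zar_V :: "'a::comm_ring_1 set \<Rightarrow> 'a set \<Rightarrow> 'a set set" where
  "zar_V R S = {P \<in> spec R. S \<subseteq> P}"

definition zariski :: "'a::comm_ring_1 set \<Rightarrow> 'a set topology" where
  "zariski R = topology_generated_by {spec R - zar_V R S | S. S \<subseteq> R}"

definition min_primes :: "'a::comm_ring_1 set \<Rightarrow> 'a set set" where
  "min_primes R = {P \<in> spec R. \<forall>Q\<in>spec R. Q \<subseteq> P \<longrightarrow> Q = P}"

definition min_top :: "'a::comm_ring_1 set \<Rightarrow> 'a set topology" where
  "min_top R = subtopology (zariski R) (min_primes R)"

definition radical_of :: "'a::comm_ring_1 set \<Rightarrow> 'a set \<Rightarrow> 'a set" where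
  "radical_of R I = {x \<in> R. \<exists>n::nat. x ^ n \<in> I}"

definition dense_subring :: "'a::comm_ring_1 set \<Rightarrow> 'a set \<Rightarrow> bool" where
  "dense_subring A B \<longleftrightarrow> subring_of A \<and> subring_of B \<and> A \<subseteq> B \<and>
     (\<forall>I. ideal_of B I \<longrightarrow> (\<forall>b \<in> B - radical_of B I. \<exists>a \<in> B - radical_of B I. a * b \<in> A))"

end

theory Submission
  imports Defs
begin

(* A prime P of B contracts to a prime P \<inter> A of A, and every minimal prime Q of A is such
   a contraction of a minimal prime of B: by Krull's lemma some prime of B avoids A - Q, and it
   contains a minimal prime.  Density says that for a prime P of B and b \<notin> P there is an a with
   a b \<in> A - P.  Hence P = {b. \<forall>a. a b \<in> A \<longrightarrow> a b \<in> P \<inter> A} is determined by P \<inter> A; if P is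
   minimal, so is P \<inter> A, since Krull's lemma applied to the multiplicative set (A - Q) (B - P),
   which avoids 0 by density, yields a prime below P; and for s \<notin> P the basic open set
   D(a s) \<inter> min(A) is a neighbourhood of P \<inter> A inside the image of D(s) \<inter> min(B), so the
   contraction is an open map. *)

definition mult_closed :: "'a::comm_ring_1 set \<Rightarrow> bool" where
  "mult_closed S \<longleftrightarrow> 1 \<in> S \<and> S * S \<subseteq> S"

lemma subring_ofD:
  assumes "subring_of R"
  shows "1 \<in> R" "0 \<in> R" "x \<in> R \<Longrightarrow> y \<in> R \<Longrightarrow> x + y \<in> R" "x \<in> R \<Longrightarrow> - x \<in> R"
    "x \<in> R \<Longrightarrow> y \<in> R \<Longrightarrow> x * y \<in> R"
  using assms unfolding subring_of_def by (metis add.right_inverse)+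

lemma subring_of_UNIV: "subring_of UNIV"
  by (simp add: subring_of_def)

lemma ideal_ofD:
  assumes "ideal_of R I"
  shows "I \<subseteq> R" "0 \<in> I" "x \<in> I \<Longrightarrow> y \<in> I \<Longrightarrow> x + y \<in> I" "x \<in> I \<Longrightarrow> - x \<in> I"
    "r \<in> R \<Longrightarrow> x \<in> I \<Longrightarrow> r * x \<in> I" "r \<in> R \<Longrightarrow> x \<in> I \<Longrightarrow> x * r \<in> I"
  using assms unfolding ideal_of_def by (auto simp: mult.commute[of x r])

lemma prime_ideal_ofD:
  assumes "prime_ideal_of R P"
  shows "ideal_of R P" "P \<noteq> R" "x \<in> R \<Longrightarrow> y \<in> R \<Longrightarrow> x * y \<in> P \<Longrightarrow> x \<in> P \<or> y \<in> P"
  using assms unfolding prime_ideal_of_def by blast+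

lemma prime_ideal_of_one_notin:
  assumes "subring_of R" "prime_ideal_of R P"
  shows "1 \<notin> P"
proof
  assume "1 \<in> P"
  then have "r \<in> P" if "r \<in> R" for r
    using ideal_ofD(6)[OF prime_ideal_ofD(1)[OF assms(2)] that \<open>1 \<in> P\<close>] by simp
  then show False
    using ideal_ofD(1) prime_ideal_ofD(1,2)[OF assms(2)] by blast
qed

lemma mult_closed_Diff_prime:
  assumes "subring_of R" "prime_ideal_of R P"
  shows "mult_closed (R - P)"
  unfolding mult_closed_def
proof
  show "1 \<in> R - P"
    using subring_ofD(1)[OF assms(1)] prime_ideal_of_one_notin[OF assms] by blast
  show "(R - P) * (R - P) \<subseteq> R - P"
    using subring_ofD(5)[OF assms(1)] prime_ideal_ofD(3)[OF assms(2)]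
    by (auto elim!: set_times_elim)
qed

lemma mult_closed_times:
  assumes "mult_closed S" "mult_closed T"
  shows "mult_closed (S * T)"
proof -
  have "(S * T) * (S * T) = (S * S) * (T * T)"
    by (simp add: ac_simps)
  also have "\<dots> \<subseteq> S * T"
    using assms by (intro set_times_mono2) (auto simp: mult_closed_def)
  finally show ?thesis
    using assms set_times_intro[of 1 S 1 T] by (simp add: mult_closed_def)
qed

lemma radical_of_prime:
  assumes "subring_of R" "prime_ideal_of R P"
  shows "radical_of R P = P"
proof -
  have "x \<in> P" if "x \<in> R" "x ^ n \<in> P" for x n
    using that(2)
  proof (induction n)
    case 0
    then show ?case using prime_ideal_of_one_notin[OF assms] by simp
  next
    case (Suc n)
    have "x ^ n \<in> R"
      using that(1) subring_ofD[OF assms(1)] by (induction n) auto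
    then show ?case
      using Suc prime_ideal_ofD(3)[OF assms(2) that(1)] by auto
  qed
  moreover have "P \<subseteq> R"
    using ideal_ofD(1)[OF prime_ideal_ofD(1)[OF assms(2)]] .
  ultimately show ?thesis
    unfolding radical_of_def by (auto intro: exI[of _ 1])
qed

lemma prime_ideal_of_contract:
  assumes "subring_of A" "subring_of B" "A \<subseteq> B" "prime_ideal_of B P"
  shows "prime_ideal_of A (P \<inter> A)"
proof -
  note A = subring_ofD[OF assms(1)]
  note P = ideal_ofD[OF prime_ideal_ofD(1)[OF assms(4)]]
  have "ideal_of A (P \<inter> A)"
    unfolding ideal_of_def
  proof (intro conjI ballI)
    show "0 \<in> P \<inter> A" using A(2) P(2) by blast
    fix x y assume "x \<in> P \<inter> A" "y \<in> P \<inter> A"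
    then show "x + y \<in> P \<inter> A" "- x \<in> P \<inter> A"
      using A(3,4) P(3,4) by auto
  next
    fix r x assume "r \<in> A" "x \<in> P \<inter> A"
    then show "r * x \<in> P \<inter> A"
      using A(5) P(5) assms(3) by auto
  qed auto
  moreover have "P \<inter> A \<noteq> A"
    using prime_ideal_of_one_notin[OF assms(2,4)] A(1) by blast
  moreover have "x \<in> P \<inter> A \<or> y \<in> P \<inter> A" if "x \<in> A" "y \<in> A" "x * y \<in> P \<inter> A" for x y
    using prime_ideal_ofD(3)[OF assms(4)] that assms(3) by blast
  ultimately show ?thesis
    unfolding prime_ideal_of_def by blast
qed

lemma ideal_of_Union_chain:
  assumes "C \<noteq> {}" "\<And>I. I \<in> C \<Longrightarrow> ideal_of R I"
    and chain: "\<And>I J. I \<in> C \<Longrightarrow> J \<in> C \<Longrightarrow> I \<subseteq> J \<or> J \<subseteq> I"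
  shows "ideal_of R (\<Union>C)"
  unfolding ideal_of_def
proof (intro conjI ballI)
  show "\<Union>C \<subseteq> R" "0 \<in> \<Union>C"
    using assms(1,2) ideal_ofD(1,2) by blast+
next
  fix x y assume "x \<in> \<Union>C" "y \<in> \<Union>C"
  then obtain I J where "I \<in> C" "J \<in> C" "x \<in> I" "y \<in> J"
    by blast
  with chain[of I J] show "x + y \<in> \<Union>C"
    using assms(2) ideal_ofD(3) by blast
next
  fix x assume "x \<in> \<Union>C"
  then show "- x \<in> \<Union>C"
    using assms(2) ideal_ofD(4) by blast
next
  fix r x assume "r \<in> R" "x \<in> \<Union>C"
  then show "r * x \<in> \<Union>C"
    using assms(2) ideal_ofD(5) by blast
qed

lemma ideal_of_UNIV_extend:
  assumes "ideal_of UNIV M"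
  shows "ideal_of UNIV {m + r * x | m r. m \<in> M}"
proof -
  note M = ideal_ofD[OF assms]
  show ?thesis
    unfolding ideal_of_def
  proof (intro conjI ballI allI subset_UNIV)
    have "(0::'a) = 0 + 0 * x"
      by simp
    then show "0 \<in> {m + r * x | m r. m \<in> M}"
      using M(2) by blast
    fix a b assume "a \<in> {m + r * x | m r. m \<in> M}" "b \<in> {m + r * x | m r. m \<in> M}"
    then obtain m r m' r' where "a = m + r * x" "b = m' + r' * x" "m \<in> M" "m' \<in> M"
      by blast
    then have "a + b = (m + m') + (r + r') * x" "- a = - m + (- r) * x"
      "m + m' \<in> M" "- m \<in> M"
      using M(3,4) by (auto simp: algebra_simps)
    then show "a + b \<in> {m + r * x | m r. m \<in> M}" "- a \<in> {m + r * x | m r. m \<in> M}"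
      by blast+
  next
    fix c a assume "a \<in> {m + r * x | m r. m \<in> M}"
    then obtain m r where "a = m + r * x" "m \<in> M"
      by blast
    then have "c * a = c * m + (c * r) * x" "c * m \<in> M"
      using M(5) by (auto simp: algebra_simps)
    then show "c * a \<in> {m + r * x | m r. m \<in> M}"
      by blast
  qed
qed

lemma prime_ideal_of_maximal_disjoint:
  assumes S: "mult_closed S" and M: "ideal_of UNIV M" "M \<inter> S = {}"
    and maximal: "\<And>I. ideal_of UNIV I \<Longrightarrow> I \<inter> S = {} \<Longrightarrow> M \<subseteq> I \<Longrightarrow> I = M"
  shows "prime_ideal_of UNIV M"
proof -
  note M_ideal = ideal_ofD[OF M(1)]
  have meets_S: "\<exists>m r. m \<in> M \<and> m + r * x \<in> S" if "x \<notin> M" for x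
  proof -
    let ?J = "{m + r * x | m r. m \<in> M}"
    have "M \<subseteq> ?J"
      by (force intro: exI[of _ 0])
    moreover have "x \<in> ?J"
      using M_ideal(2) by (force intro: exI[of _ 0] exI[of _ 1])
    ultimately have "?J \<inter> S \<noteq> {}"
      using maximal[OF ideal_of_UNIV_extend[OF M(1)]] that by blast
    then show ?thesis
      by blast
  qed
  have "x \<in> M \<or> y \<in> M" if xy: "x * y \<in> M" for x y
  proof (rule ccontr)
    assume "\<not> (x \<in> M \<or> y \<in> M)"
    then obtain m r m' r' where mr: "m \<in> M" "m + r * x \<in> S" "m' \<in> M" "m' + r' * y \<in> S"
      using meets_S by meson
    have "(m + r * x) * (m' + r' * y) \<in> S"
      using S mr(2,4) by (auto simp: mult_closed_def)
    moreover have "(m + r * x) * (m' + r' * y) = (m' + r' * y) * m + (r * x) * m' + (r * r') * (x * y)"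
      by (simp add: algebra_simps)
    then have "(m + r * x) * (m' + r' * y) \<in> M"
      using M_ideal(3,5) mr(1,3) xy by simp
    ultimately show False
      using M(2) by blast
  qed
  moreover have "M \<noteq> UNIV"
    using S M(2) by (auto simp: mult_closed_def)
  ultimately show ?thesis
    using M(1) unfolding prime_ideal_of_def by blast
qed

lemma prime_ideal_disjoint_mult_closed:
  assumes S: "mult_closed S" and "0 \<notin> S"
  obtains P where "prime_ideal_of UNIV P" "P \<inter> S = {}"
proof -
  define F where "F = {I. ideal_of UNIV I \<and> I \<inter> S = {}}"
  have "{0} \<in> F"
    using \<open>0 \<notin> S\<close> by (auto simp: F_def ideal_of_def)
  moreover have "\<Union>C \<in> F" if "C \<noteq> {}" "subset.chain F C" for C
    using that ideal_of_Union_chain[of C UNIV] unfolding F_def subset_chain_def by blast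
  ultimately obtain M where "M \<in> F" and "\<forall>I\<in>F. M \<subseteq> I \<longrightarrow> I = M"
    using subset_Zorn_nonempty[of F] by blast
  then have "prime_ideal_of UNIV M" "M \<inter> S = {}"
    using prime_ideal_of_maximal_disjoint[OF S] unfolding F_def by auto
  then show thesis
    using that by blast
qed

lemma prime_ideal_of_Inter_chain:
  assumes "C \<noteq> {}" and prime: "\<And>P. P \<in> C \<Longrightarrow> prime_ideal_of UNIV P"
    and chain: "\<And>P Q. P \<in> C \<Longrightarrow> Q \<in> C \<Longrightarrow> P \<subseteq> Q \<or> Q \<subseteq> P"
  shows "prime_ideal_of UNIV (\<Inter>C)"
proof -
  note ideal = ideal_ofD[OF prime_ideal_ofD(1)[OF prime]]
  have "ideal_of UNIV (\<Inter>C)"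
    unfolding ideal_of_def using ideal(2-5) by blast
  moreover have "\<Inter>C \<noteq> UNIV"
    using assms(1) prime_ideal_of_one_notin[OF subring_of_UNIV prime] by blast
  moreover have "x \<in> \<Inter>C \<or> y \<in> \<Inter>C" if xy: "x * y \<in> \<Inter>C" for x y
  proof (rule ccontr)
    assume "\<not> (x \<in> \<Inter>C \<or> y \<in> \<Inter>C)"
    then obtain P Q where PQ: "P \<in> C" "Q \<in> C" "x \<notin> P" "y \<notin> Q"
      by blast
    then have "x \<notin> P \<inter> Q" "y \<notin> P \<inter> Q" "x * y \<in> P \<inter> Q" "P \<inter> Q \<in> C"
      using xy chain[of P Q] by (auto simp: Int_absorb1 Int_absorb2)
    then show False
      using prime_ideal_ofD(3)[OF prime] by blast
  qed
  ultimately show ?thesis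
    unfolding prime_ideal_of_def by blast
qed

lemma min_primes_UNIV_iff:
  "P \<in> min_primes UNIV \<longleftrightarrow>
     prime_ideal_of UNIV P \<and> (\<forall>Q. prime_ideal_of UNIV Q \<longrightarrow> Q \<subseteq> P \<longrightarrow> Q = P)"
  unfolding min_primes_def spec_def by blast

lemma min_primes_below:
  assumes "prime_ideal_of UNIV P"
  obtains Q where "Q \<in> min_primes UNIV" "Q \<subseteq> P"
proof -
  define F where "F = {Q. prime_ideal_of UNIV Q \<and> Q \<subseteq> P}"
  have "partial_order_on F (relation_of (\<lambda>X Y. Y \<subseteq> X) F)"
    by (rule partial_order_on_relation_ofI) auto
  moreover have "\<exists>L\<in>F. \<forall>Q\<in>C. L \<subseteq> Q" if "C \<in> Chains (relation_of (\<lambda>X Y. Y \<subseteq> X) F)" for C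
  proof (cases "C = {}")
    case True
    then show ?thesis
      using assms by (auto simp: F_def)
  next
    case False
    have CF: "C \<subseteq> F" and "\<And>P Q. P \<in> C \<Longrightarrow> Q \<in> C \<Longrightarrow> P \<subseteq> Q \<or> Q \<subseteq> P"
      using that by (auto simp: Chains_def relation_of_def)
    then have "prime_ideal_of UNIV (\<Inter>C)"
      using prime_ideal_of_Inter_chain[OF False] by (auto simp: F_def)
    moreover have "\<Inter>C \<subseteq> P"
      using CF False by (auto simp: F_def)
    ultimately have "\<Inter>C \<in> F"
      by (simp add: F_def)
    then show ?thesis
      by blast
  qed
  ultimately obtain M where "M \<in> F" "\<forall>Q\<in>F. Q \<subseteq> M \<longrightarrow> Q = M"
    using predicate_Zorn[of F "\<lambda>X Y. Y \<subseteq> X"] by blast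
  then have "M \<in> min_primes UNIV" "M \<subseteq> P"
    unfolding min_primes_UNIV_iff F_def by auto
  then show thesis
    using that by blast
qed

lemma min_primes_contract_surj:
  assumes A: "subring_of A" and Q: "Q \<in> min_primes A"
  obtains P where "P \<in> min_primes UNIV" "P \<inter> A = Q"
proof -
  have Q_prime: "prime_ideal_of A Q" and Q_min: "\<And>Q'. prime_ideal_of A Q' \<Longrightarrow> Q' \<subseteq> Q \<Longrightarrow> Q' = Q"
    using Q unfolding min_primes_def spec_def by blast+
  have "0 \<notin> A - Q"
    using ideal_ofD(2)[OF prime_ideal_ofD(1)[OF Q_prime]] by blast
  then obtain P' where P': "prime_ideal_of UNIV P'" "P' \<inter> (A - Q) = {}"
    using prime_ideal_disjoint_mult_closed[OF mult_closed_Diff_prime[OF A Q_prime]] by blast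
  obtain P where P: "P \<in> min_primes UNIV" "P \<subseteq> P'"
    using min_primes_below[OF P'(1)] .
  have "prime_ideal_of A (P \<inter> A)"
    using prime_ideal_of_contract[OF A subring_of_UNIV subset_UNIV] P(1) min_primes_UNIV_iff by blast
  moreover have "P \<inter> A \<subseteq> Q"
    using P(2) P'(2) by blast
  ultimately have "P \<inter> A = Q"
    using Q_min by blast
  then show thesis
    using that P(1) by blast
qed

lemma dense_subring_subring: "dense_subring A B \<Longrightarrow> subring_of A"
  unfolding dense_subring_def by blast

lemma dense_subring_prime:
  assumes "dense_subring A UNIV" "prime_ideal_of UNIV P" "b \<notin> P"
  obtains a where "a * b \<in> A - P"
proof -
  have rad: "radical_of UNIV P = P"
    using radical_of_prime[OF subring_of_UNIV assms(2)] .
  have "\<forall>b \<in> UNIV - radical_of UNIV P. \<exists>a \<in> UNIV - radical_of UNIV P. a * b \<in> A"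
    using assms(1) prime_ideal_ofD(1)[OF assms(2)] unfolding dense_subring_def by blast
  then obtain a where "a \<notin> P" "a * b \<in> A"
    using assms(3) unfolding rad by blast
  then show thesis
    using that prime_ideal_ofD(3)[OF assms(2)] assms(3) by blast
qed

lemma dense_subring_prime_eq:
  assumes "dense_subring A UNIV" "prime_ideal_of UNIV P"
  shows "P = {b. \<forall>a. a * b \<in> A \<longrightarrow> a * b \<in> P \<inter> A}"
proof
  show "P \<subseteq> {b. \<forall>a. a * b \<in> A \<longrightarrow> a * b \<in> P \<inter> A}"
    using ideal_ofD(5)[OF prime_ideal_ofD(1)[OF assms(2)]] by blast
  show "{b. \<forall>a. a * b \<in> A \<longrightarrow> a * b \<in> P \<inter> A} \<subseteq> P"
  proof (rule subsetI, rule ccontr)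
    fix b assume "b \<in> {b. \<forall>a. a * b \<in> A \<longrightarrow> a * b \<in> P \<inter> A}" "b \<notin> P"
    moreover obtain a where "a * b \<in> A - P"
      using dense_subring_prime[OF assms \<open>b \<notin> P\<close>] .
    ultimately show False
      by blast
  qed
qed

lemma dense_subring_inj_on_contract:
  assumes "dense_subring A UNIV"
  shows "inj_on (\<lambda>P. P \<inter> A) (spec UNIV)"
proof (rule inj_onI)
  fix P Q assume "P \<in> spec UNIV" "Q \<in> spec UNIV" and eq: "P \<inter> A = Q \<inter> A"
  then have "prime_ideal_of UNIV P" "prime_ideal_of UNIV Q"
    unfolding spec_def by simp_all
  then have "P = {b. \<forall>a. a * b \<in> A \<longrightarrow> a * b \<in> P \<inter> A}"
    and "Q = {b. \<forall>a. a * b \<in> A \<longrightarrow> a * b \<in> Q \<inter> A}"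
    using dense_subring_prime_eq[OF assms] by blast+
  then show "P = Q"
    unfolding eq by simp
qed

lemma dense_subring_zero_notin_times:
  assumes dense: "dense_subring A UNIV" and P: "prime_ideal_of UNIV P"
    and Q: "prime_ideal_of A Q" "Q \<subseteq> P"
  shows "0 \<notin> (A - Q) * (UNIV - P)"
proof
  assume "0 \<in> (A - Q) * (UNIV - P)"
  then obtain s t where st: "s * t = 0" "s \<in> A - Q" "t \<notin> P"
    by (auto elim!: set_times_elim)
  obtain a where a: "a * t \<in> A - P"
    using dense_subring_prime[OF dense P \<open>t \<notin> P\<close>] .
  have "s * (a * t) = a * (s * t)"
    by (simp add: ac_simps)
  then have "s * (a * t) \<in> Q"
    using st(1) ideal_ofD(2)[OF prime_ideal_ofD(1)[OF Q(1)]] by simp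
  then show False
    using prime_ideal_ofD(3)[OF Q(1)] st(2) a Q(2) by blast
qed

lemma dense_subring_contract_min_primes:
  assumes dense: "dense_subring A UNIV" and P: "P \<in> min_primes UNIV"
  shows "P \<inter> A \<in> min_primes A"
proof -
  have A: "subring_of A"
    using dense_subring_subring[OF dense] .
  have P_prime: "prime_ideal_of UNIV P" and P_min: "\<And>Q. prime_ideal_of UNIV Q \<Longrightarrow> Q \<subseteq> P \<Longrightarrow> Q = P"
    using P unfolding min_primes_UNIV_iff by blast+
  have PA_prime: "prime_ideal_of A (P \<inter> A)"
    using prime_ideal_of_contract[OF A subring_of_UNIV subset_UNIV P_prime] .
  have "Q = P \<inter> A" if Q: "prime_ideal_of A Q" "Q \<subseteq> P \<inter> A" for Q
  proof -
    let ?S = "(A - Q) * (UNIV - P)"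
    have "0 \<notin> ?S"
      using dense_subring_zero_notin_times[OF dense P_prime Q(1)] Q(2) by blast
    moreover have "mult_closed ?S"
      using mult_closed_times[OF mult_closed_Diff_prime[OF A Q(1)]
          mult_closed_Diff_prime[OF subring_of_UNIV P_prime]] .
    ultimately obtain P' where P': "prime_ideal_of UNIV P'" "P' \<inter> ?S = {}"
      using prime_ideal_disjoint_mult_closed by metis
    have "1 \<in> A - Q" "1 \<in> UNIV - P"
      using mult_closed_Diff_prime[OF A Q(1)] mult_closed_Diff_prime[OF subring_of_UNIV P_prime]
      by (simp_all add: mult_closed_def)
    then have "UNIV - P \<subseteq> ?S" "A - Q \<subseteq> ?S"
      using set_times_intro[of 1 "A - Q" _ "UNIV - P"] set_times_intro[of _ "A - Q" 1 "UNIV - P"]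
      by auto
    then have "P' \<subseteq> P" "P' \<inter> (A - Q) = {}"
      using P'(2) by blast+
    then have "P \<inter> A \<subseteq> Q"
      using P_min[OF P'(1)] by blast
    then show ?thesis
      using Q(2) by blast
  qed
  then show ?thesis
    using PA_prime unfolding min_primes_def spec_def by blast
qed

lemma dense_subring_bij_betw_min_primes:
  assumes "dense_subring A UNIV"
  shows "bij_betw (\<lambda>P. P \<inter> A) (min_primes UNIV) (min_primes A)"
proof (rule bij_betw_imageI)
  show "inj_on (\<lambda>P. P \<inter> A) (min_primes UNIV)"
    by (rule inj_on_subset[OF dense_subring_inj_on_contract[OF assms]]) (auto simp: min_primes_def)
  show "(\<lambda>P. P \<inter> A) ` min_primes UNIV = min_primes A"
  proof
    show "(\<lambda>P. P \<inter> A) ` min_primes UNIV \<subseteq> min_primes A"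
      using dense_subring_contract_min_primes[OF assms] by blast
    show "min_primes A \<subseteq> (\<lambda>P. P \<inter> A) ` min_primes UNIV"
      using min_primes_contract_surj[OF dense_subring_subring[OF assms]] by (metis image_eqI subsetI)
  qed
qed

definition zar_D :: "'a::comm_ring_1 set \<Rightarrow> 'a \<Rightarrow> 'a set set" where
  "zar_D R c = {P \<in> spec R. c \<notin> P}"

lemma topspace_zariski: "topspace (zariski R) = spec R"
proof -
  have "zar_V R R = {}"
    unfolding zar_V_def spec_def prime_ideal_of_def ideal_of_def by blast
  then have "spec R \<in> {spec R - zar_V R S | S. S \<subseteq> R}"
    by blast
  then show ?thesis
    unfolding zariski_def topology_generated_by_topspace by blast
qed

lemma topspace_min_top: "topspace (min_top R) = min_primes R"
  unfolding min_top_def topspace_subtopology topspace_zariski min_primes_def by blast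

lemma openin_zariski_zar_D:
  assumes "c \<in> R"
  shows "openin (zariski R) (zar_D R c)"
proof -
  have "zar_D R c = spec R - zar_V R {c}"
    unfolding zar_D_def zar_V_def by blast
  then have "zar_D R c \<in> {spec R - zar_V R S | S. S \<subseteq> R}"
    using assms by blast
  then show ?thesis
    unfolding zariski_def openin_topology_generated_by_iff by (rule generate_topology_on.Basis)
qed

lemma zar_D_mult:
  assumes "subring_of R" "x \<in> R" "y \<in> R"
  shows "zar_D R (x * y) = zar_D R x \<inter> zar_D R y"
proof -
  have "x * y \<in> P \<longleftrightarrow> x \<in> P \<or> y \<in> P" if "prime_ideal_of R P" for P
    using assms(2,3) prime_ideal_ofD(3)[OF that] ideal_ofD(5,6)[OF prime_ideal_ofD(1)[OF that]]
    by blast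
  then show ?thesis
    unfolding zar_D_def spec_def by blast
qed

lemma openin_zariski_iff:
  assumes "subring_of R"
  shows "openin (zariski R) W \<longleftrightarrow> (\<forall>P\<in>W. \<exists>c\<in>R. P \<in> zar_D R c \<and> zar_D R c \<subseteq> W)"
proof
  assume "openin (zariski R) W"
  then have "generate_topology_on {spec R - zar_V R S | S. S \<subseteq> R} W"
    unfolding zariski_def openin_topology_generated_by_iff .
  then show "\<forall>P\<in>W. \<exists>c\<in>R. P \<in> zar_D R c \<and> zar_D R c \<subseteq> W"
  proof (induction rule: generate_topology_on.induct)
    case (Int U V)
    show ?case
    proof
      fix P assume "P \<in> U \<inter> V"
      then obtain c d where "c \<in> R" "P \<in> zar_D R c" "zar_D R c \<subseteq> U"
        and "d \<in> R" "P \<in> zar_D R d" "zar_D R d \<subseteq> V"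
        using Int.IH by blast
      moreover have "c * d \<in> R"
        using subring_ofD(5)[OF assms] \<open>c \<in> R\<close> \<open>d \<in> R\<close> .
      ultimately show "\<exists>c\<in>R. P \<in> zar_D R c \<and> zar_D R c \<subseteq> U \<inter> V"
        using zar_D_mult[OF assms] by blast
    qed
  next
    case (Basis U)
    then obtain S where U: "U = spec R - zar_V R S" and "S \<subseteq> R"
      by blast
    show ?case
    proof
      fix P assume "P \<in> U"
      then obtain c where "c \<in> S" "c \<notin> P" "P \<in> spec R"
        unfolding U zar_V_def by blast
      then show "\<exists>c\<in>R. P \<in> zar_D R c \<and> zar_D R c \<subseteq> U"
        using \<open>S \<subseteq> R\<close> unfolding U zar_D_def zar_V_def by blast
    qed
  qed blast+
next
  assume basic: "\<forall>P\<in>W. \<exists>c\<in>R. P \<in> zar_D R c \<and> zar_D R c \<subseteq> W"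
  show "openin (zariski R) W"
  proof (subst openin_subopen, intro ballI)
    fix P assume "P \<in> W"
    then obtain c where "c \<in> R" "P \<in> zar_D R c" "zar_D R c \<subseteq> W"
      using basic by blast
    then show "\<exists>T. openin (zariski R) T \<and> P \<in> T \<and> T \<subseteq> W"
      using openin_zariski_zar_D by blast
  qed
qed

lemma contract_in_zar_D:
  assumes "subring_of A" "subring_of B" "A \<subseteq> B" "P \<in> spec B" "c \<in> A"
  shows "P \<inter> A \<in> zar_D A c \<longleftrightarrow> P \<in> zar_D B c"
  using prime_ideal_of_contract[OF assms(1-3)] assms(4,5) unfolding zar_D_def spec_def by blast

lemma continuous_map_zariski_contract:
  assumes A: "subring_of A" and B: "subring_of B" and "A \<subseteq> B"
  shows "continuous_map (zariski B) (zariski A) (\<lambda>P. P \<inter> A)"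
  unfolding continuous_map_def
proof (intro conjI allI impI)
  show "(\<lambda>P. P \<inter> A) \<in> topspace (zariski B) \<rightarrow> topspace (zariski A)"
    using prime_ideal_of_contract[OF assms] unfolding topspace_zariski spec_def by blast
next
  fix U assume U: "openin (zariski A) U"
  show "openin (zariski B) {P \<in> topspace (zariski B). P \<inter> A \<in> U}"
    unfolding openin_zariski_iff[OF B] topspace_zariski
  proof
    fix P assume P: "P \<in> {P \<in> spec B. P \<inter> A \<in> U}"
    then obtain c where c: "c \<in> A" "P \<inter> A \<in> zar_D A c" "zar_D A c \<subseteq> U"
      using U unfolding openin_zariski_iff[OF A] by blast
    then have "P \<in> zar_D B c" "zar_D B c \<subseteq> {P \<in> spec B. P \<inter> A \<in> U}"
      using P contract_in_zar_D[OF assms _ c(1)] unfolding zar_D_def by blast+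
    then show "\<exists>c\<in>B. P \<in> zar_D B c \<and> zar_D B c \<subseteq> {P \<in> spec B. P \<inter> A \<in> U}"
      using c(1) \<open>A \<subseteq> B\<close> by blast
  qed
qed

lemma dense_subring_continuous_map_min_top:
  assumes "dense_subring A UNIV"
  shows "continuous_map (min_top UNIV) (min_top A) (\<lambda>P. P \<inter> A)"
  unfolding min_top_def continuous_map_in_subtopology
proof
  show "continuous_map (subtopology (zariski UNIV) (min_primes UNIV)) (zariski A) (\<lambda>P. P \<inter> A)"
    using continuous_map_zariski_contract[OF dense_subring_subring[OF assms] subring_of_UNIV]
    by (simp add: continuous_map_from_subtopology)
  show "(\<lambda>P. P \<inter> A) \<in> topspace (subtopology (zariski UNIV) (min_primes UNIV)) \<rightarrow> min_primes A"
    using dense_subring_contract_min_primes[OF assms] by auto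
qed

lemma dense_subring_contract_zar_D_nhd:
  assumes dense: "dense_subring A UNIV" and P: "P \<in> min_primes UNIV" "P \<in> zar_D UNIV s"
  obtains c where "c \<in> A" "P \<inter> A \<in> zar_D A c"
    "zar_D A c \<inter> min_primes A \<subseteq> (\<lambda>P. P \<inter> A) ` (zar_D UNIV s \<inter> min_primes UNIV)"
proof -
  have A: "subring_of A"
    using dense_subring_subring[OF dense] .
  have P_spec: "P \<in> spec UNIV"
    using P(1) by (simp add: min_primes_def)
  obtain a where a: "a * s \<in> A - P"
    using dense_subring_prime[OF dense] P_spec P(2) unfolding zar_D_def spec_def by blast
  have contract: "P' \<inter> A \<in> zar_D A (a * s) \<longleftrightarrow> P' \<in> zar_D UNIV (a * s)" if "P' \<in> spec UNIV" for P'
    using contract_in_zar_D[OF A subring_of_UNIV subset_UNIV that] a by blast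
  have "zar_D A (a * s) \<inter> min_primes A \<subseteq> (\<lambda>P. P \<inter> A) ` (zar_D UNIV s \<inter> min_primes UNIV)"
  proof
    fix Q assume Q: "Q \<in> zar_D A (a * s) \<inter> min_primes A"
    then obtain P' where P': "P' \<in> min_primes UNIV" "P' \<inter> A = Q"
      using min_primes_contract_surj[OF A] by blast
    then have "P' \<in> zar_D UNIV (a * s)"
      using Q contract by (auto simp: min_primes_def)
    then have "P' \<in> zar_D UNIV s"
      using zar_D_mult[OF subring_of_UNIV] by blast
    then show "Q \<in> (\<lambda>P. P \<inter> A) ` (zar_D UNIV s \<inter> min_primes UNIV)"
      using P' by blast
  qed
  moreover have "P \<inter> A \<in> zar_D A (a * s)"
    using contract[OF P_spec] P_spec a unfolding zar_D_def by blast
  ultimately show thesis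
    using that a by blast
qed

lemma dense_subring_open_map_min_top:
  assumes dense: "dense_subring A UNIV"
  shows "open_map (min_top UNIV) (min_top A) (\<lambda>P. P \<inter> A)"
  unfolding open_map_def
proof (intro allI impI)
  fix U :: "'a set set"
  assume "openin (min_top UNIV) U"
  then obtain T where T: "openin (zariski UNIV) T" "U = T \<inter> min_primes UNIV"
    unfolding min_top_def openin_subtopology by blast
  show "openin (min_top A) ((\<lambda>P. P \<inter> A) ` U)"
  proof (subst openin_subopen, intro ballI)
    fix Q assume "Q \<in> (\<lambda>P. P \<inter> A) ` U"
    then obtain P where P: "P \<in> U" "Q = P \<inter> A"
      by blast
    then have P_min: "P \<in> min_primes UNIV"
      using T(2) by blast
    obtain s where s: "P \<in> zar_D UNIV s" "zar_D UNIV s \<subseteq> T"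
      using T P unfolding openin_zariski_iff[OF subring_of_UNIV] by blast
    obtain c where c: "c \<in> A" "Q \<in> zar_D A c"
      "zar_D A c \<inter> min_primes A \<subseteq> (\<lambda>P. P \<inter> A) ` (zar_D UNIV s \<inter> min_primes UNIV)"
      using dense_subring_contract_zar_D_nhd[OF dense P_min s(1)] P(2) by blast
    have "openin (min_top A) (zar_D A c \<inter> min_primes A)"
      unfolding min_top_def using openin_zariski_zar_D[OF c(1)] by (rule openin_subtopology_Int)
    moreover have "Q \<in> zar_D A c \<inter> min_primes A"
      using c(2) dense_subring_contract_min_primes[OF dense P_min] P(2) by blast
    moreover have "zar_D A c \<inter> min_primes A \<subseteq> (\<lambda>P. P \<inter> A) ` U"
      using c(3) s(2) T(2) by blast
    ultimately show "\<exists>V. openin (min_top A) V \<and> Q \<in> V \<and> V \<subseteq> (\<lambda>P. P \<inter> A) ` U"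
      by blast
  qed
qed

theorem mainTheorem7:
  fixes A :: "'a::comm_ring_1 set"
  assumes "dense_subring A (UNIV :: 'a set)"
  shows "homeomorphic_map (min_top (UNIV :: 'a set)) (min_top A) (\<lambda>P. P \<inter> A)"
proof (rule bijective_open_imp_homeomorphic_map)
  show "continuous_map (min_top UNIV) (min_top A) (\<lambda>P. P \<inter> A)"
    using dense_subring_continuous_map_min_top[OF assms] .
  show "open_map (min_top UNIV) (min_top A) (\<lambda>P. P \<inter> A)"
    using dense_subring_open_map_min_top[OF assms] .
  show "(\<lambda>P. P \<inter> A) ` topspace (min_top UNIV) = topspace (min_top A)"
    "inj_on (\<lambda>P. P \<inter> A) (topspace (min_top UNIV))"
    using dense_subring_bij_betw_min_primes[OF assms]
    unfolding topspace_min_top bij_betw_def by simp_all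
qed

end
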